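(* Let $N\ge1$, $M=2^N$, let $\mathcal{A}=\{a_0,\dots,a_{M-1}\}\subset\mathbb{C}$ be a constellation with any labelling, and let $S\subseteq\{0,\dots,N-1\}$. Let $\mathcal{M}'_S=\{i:\ b_l(i)=0\ \text{for all } l\in\{0,\dots,N-1\}\setminus S\}$. Suppose the points $\{a_i: i\in\mathcal{M}'_S\}$ form a family of rectangles (each with four of these points as vertices, together covering all of them) such that no two rectangles share a vertex, and in each rectangle the labels of one diagonal pair both contain an odd number of $0$s while the labels of the other diagonal pair both contain an even number of $0$s (in their $N$-bit binary representations). Then for all $y,h\in\mathbb{C}$, with $d_i=|y-ha_i|^2$, the coefficient $\bar d_S$ of the monomial $\prod_{n\in S}z_n$ in the associated pseudo-Boolean function $f$ is zero.
   Context: For $i\in\{0,\dots,M-1\}$ write its $N$-bit binary representation as $b_0(i)\cdots b_{N-1}(i)$ with $b_0$ the most significant bit; this is the label of $a_i$. Given $d_0,\dots,d_{M-1}$, define $f(z_0,\dots,z_{N-1})=\sum_{i}d_i\prod_{n=0}^{N-1}B_{i,n}(z_n)$, $z_n\in\{0,1\}$, with $B_{i,n}(z)=z$ if $b_n(i)=1$ and $1-z$ if $b_n(i)=0$. Its multilinear expansion is $f=\sum_{S}\bar d_S\prod_{n\in S}z_n$ with $\bar d_S=\sum_{i\in\mathcal{M}'_S}d_i\prod_{n\in S}(-1)^{1-b_n(i)}$. *)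

theory Defs
  imports Complex_Main
begin

text \<open>Bit n (n = 0 is the most significant) of the N-bit representation of i.\<close>
definition lbit :: "nat \<Rightarrow> nat \<Rightarrow> nat \<Rightarrow> nat" where
  "lbit N n i = (if bit i (N - 1 - n) then 1 else 0)"

definition Mprime :: "nat \<Rightarrow> nat set \<Rightarrow> nat set" where
  "Mprime N S = {i. i < 2 ^ N \<and> (\<forall>l<N. l \<notin> S \<longrightarrow> lbit N l i = 0)}"

definition zeros :: "nat \<Rightarrow> nat \<Rightarrow> nat" where
  "zeros N i = card {n. n < N \<and> lbit N n i = 0}"

text \<open>Coefficient of the monomial prod_{n in S} z_n of the pseudo-Boolean function f.\<close>
definition dbar :: "nat \<Rightarrow> (nat \<Rightarrow> real) \<Rightarrow> nat set \<Rightarrow> real" where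
  "dbar N d S = (\<Sum>i\<in>Mprime N S. d i * (\<Prod>n\<in>S. (-1) ^ (1 - lbit N n i)))"

text \<open>w, x, y, z are the consecutive vertices of a (non-degenerate) rectangle:
  four distinct points, a parallelogram, with a right angle at w.
  Hence {w, y} and {x, z} are the two diagonal pairs.\<close>
definition is_rectangle :: "complex \<Rightarrow> complex \<Rightarrow> complex \<Rightarrow> complex \<Rightarrow> bool" where
  "is_rectangle w x y z \<longleftrightarrow> distinct [w, x, y, z] \<and> w + y = x + z
      \<and> Re ((x - w) * cnj (z - w)) = 0"

end

theory Submission
  imports Defs
begin

text \<open>On \<open>M'_S\<close> every bit outside \<open>S\<close> is zero, so the sign \<open>\<Prod>n\<in>S. (-1)^(1 - b_n(i))\<close>
  equals \<open>(-1)^(number of zeros of i)\<close> up to the global factor \<open>(-1)^(N - |S|)\<close>. Hence the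
  coefficient is, up to sign, the sum of the \<open>d_i\<close> signed by the parity of the zeros of the
  labels. This sum splits over the rectangles, and on each rectangle it vanishes by the British
  flag theorem: the points \<open>h a_i\<close> again form a (possibly degenerate) rectangle, and the squared
  distances from \<open>y\<close> to its two diagonal pairs have equal sums.\<close>

lemma lbit_eq_0_or_1: "lbit N n i = 0 \<or> lbit N n i = 1"
  by (simp add: lbit_def)

lemma zeros_Mprime:
  assumes S: "S \<subseteq> {..<N}" and i: "i \<in> Mprime N S"
  shows "zeros N i = card {n\<in>S. lbit N n i = 0} + (N - card S)"
proof -
  have "finite S" using S finite_subset by blast
  have "lbit N l i = 0" if "l < N" "l \<notin> S" for l
    using i that by (simp add: Mprime_def)
  then have zero_bits: "{n. n < N \<and> lbit N n i = 0} = {n\<in>S. lbit N n i = 0} \<union> ({..<N} - S)"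
    using S by auto
  have "zeros N i = card {n\<in>S. lbit N n i = 0} + card ({..<N} - S)"
    unfolding zeros_def zero_bits using \<open>finite S\<close> by (subst card_Un_disjoint) auto
  also have "card ({..<N} - S) = N - card S"
    using S \<open>finite S\<close> by (simp add: card_Diff_subset)
  finally show ?thesis .
qed

lemma sign_prod_Mprime:
  assumes S: "S \<subseteq> {..<N}" and i: "i \<in> Mprime N S"
  shows "(\<Prod>n\<in>S. (-1::real) ^ (1 - lbit N n i)) = (-1) ^ (N - card S) * (-1) ^ zeros N i"
proof -
  have "finite S" using S finite_subset by blast
  have "(\<Prod>n\<in>S. (-1::real) ^ (1 - lbit N n i)) = (\<Prod>n\<in>S. if lbit N n i = 0 then -1 else 1)"
    by (rule prod.cong) (use lbit_eq_0_or_1 in auto)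
  also have "\<dots> = (-1) ^ card {n\<in>S. lbit N n i = 0}"
    using \<open>finite S\<close> by (simp add: prod.If_cases Int_def)
  also have "\<dots> = (-1) ^ (N - card S) * (-1) ^ zeros N i"
    unfolding zeros_Mprime[OF assms] power_add
    by (simp flip: mult.assoc power_mult_distrib)
  finally show ?thesis .
qed

lemma dbar_eq_parity_sum:
  assumes "S \<subseteq> {..<N}"
  shows "dbar N d S = (-1) ^ (N - card S) * (\<Sum>i\<in>Mprime N S. (-1) ^ zeros N i * d i)"
  unfolding dbar_def sum_distrib_left
proof (intro sum.cong refl)
  fix i assume "i \<in> Mprime N S"
  then show "d i * (\<Prod>n\<in>S. (-1) ^ (1 - lbit N n i)) = (-1) ^ (N - card S) * ((-1) ^ zeros N i * d i)"
    using sign_prod_Mprime[OF assms] by simp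
qed

lemma parallelogram_sq_dist:
  fixes c w x v z :: complex
  assumes "w + v = x + z"
  shows "(cmod (c - w))\<^sup>2 + (cmod (c - v))\<^sup>2
           = (cmod (c - x))\<^sup>2 + (cmod (c - z))\<^sup>2 + 2 * Re ((x - w) * cnj (z - w))"
proof -
  have v: "v = x + z - w" using assms by (simp add: algebra_simps)
  show ?thesis
    unfolding v cmod_power2 by (simp add: power2_eq_square algebra_simps)
qed

lemma rectangle_scaled_sq_dist:
  assumes "is_rectangle w x v z"
  shows "(cmod (c - h * w))\<^sup>2 + (cmod (c - h * v))\<^sup>2 = (cmod (c - h * x))\<^sup>2 + (cmod (c - h * z))\<^sup>2"
proof -
  from assms have par: "w + v = x + z" and right: "Re ((x - w) * cnj (z - w)) = 0"
    by (auto simp: is_rectangle_def)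
  have "h * w + h * v = h * x + h * z" using par by (simp flip: distrib_left)
  moreover have "Re ((h * x - h * w) * cnj (h * z - h * w)) = (cmod h)\<^sup>2 * Re ((x - w) * cnj (z - w))"
    unfolding cmod_power2 by (simp add: algebra_simps power2_eq_square)
  ultimately show ?thesis
    using right parallelogram_sq_dist[of "h * w" "h * v" "h * x" "h * z" c] by simp
qed

lemma rectangle_parity_sum_eq_0:
  fixes k :: "nat \<Rightarrow> nat"
  assumes rect: "is_rectangle (a p) (a q) (a r) (a s)"
    and "odd (k p)" "odd (k r)" "even (k q)" "even (k s)"
  shows "(\<Sum>i\<in>{p, q, r, s}. (-1) ^ k i * (cmod (y - h * a i))\<^sup>2) = 0"
proof -
  have "distinct [p, q, r, s]" using rect by (auto simp: is_rectangle_def)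
  then have "(\<Sum>i\<in>{p, q, r, s}. (-1) ^ k i * (cmod (y - h * a i))\<^sup>2)
      = (cmod (y - h * a q))\<^sup>2 + (cmod (y - h * a s))\<^sup>2
        - ((cmod (y - h * a p))\<^sup>2 + (cmod (y - h * a r))\<^sup>2)"
    using assms(2-5) by simp
  then show ?thesis
    using rectangle_scaled_sq_dist[OF rect, of y h] by simp
qed

theorem corollary2:
  fixes N :: nat and a :: "nat \<Rightarrow> complex" and S :: "nat set"
    and P :: "nat set set" and y h :: complex
  assumes "N \<ge> 1"
    and "inj_on a {..<2 ^ N}"
    and "S \<subseteq> {..<N}"
    and "\<Union>P = Mprime N S"
    and "\<forall>Q\<in>P. \<forall>Q'\<in>P. Q \<noteq> Q' \<longrightarrow> Q \<inter> Q' = {}"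
    and "\<forall>Q\<in>P. \<exists>p q r s. Q = {p, q, r, s} \<and> is_rectangle (a p) (a q) (a r) (a s)
            \<and> odd (zeros N p) \<and> odd (zeros N r) \<and> even (zeros N q) \<and> even (zeros N s)"
  shows "dbar N (\<lambda>i. (cmod (y - h * a i))\<^sup>2) S = 0"
proof -
  define g where "g i = (-1) ^ zeros N i * (cmod (y - h * a i))\<^sup>2" for i
  have "finite (Mprime N S)" by (simp add: Mprime_def)
  then have finite_blocks: "\<forall>Q\<in>P. finite Q"
    using assms(4) by (metis Union_upper finite_subset)
  have "(\<Sum>i\<in>Mprime N S. g i) = (\<Sum>Q\<in>P. \<Sum>i\<in>Q. g i)"
    using sum.Union_disjoint[OF finite_blocks assms(5), of g]
    unfolding assms(4) by simp
  also have "\<dots> = 0"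
  proof (rule sum.neutral, rule ballI)
    fix Q assume "Q \<in> P"
    obtain p q r s where "Q = {p, q, r, s}"
      and "is_rectangle (a p) (a q) (a r) (a s)"
      and "odd (zeros N p)" "odd (zeros N r)" "even (zeros N q)" "even (zeros N s)"
      using bspec[OF assms(6) \<open>Q \<in> P\<close>] by (elim exE conjE) (rule that)
    then show "(\<Sum>i\<in>Q. g i) = 0"
      unfolding g_def by (simp add: rectangle_parity_sum_eq_0)
  qed
  finally show ?thesis
    by (simp add: dbar_eq_parity_sum[OF assms(3)] g_def)
qed

end
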